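(* Let $A\in GL(4,\mathbb{R})$ satisfy condition (E) (defined in the context). \begin{enumerate} \item If the matrix $A^2$ also satisfies condition (E), then $(\det A)^2=1$. \item If $(\det A)^2=1$, then there exists $k\in S^1$ such that $A$ is $k$-congruent; moreover, either such a $k$ is unique, or $A$ is $k$-congruent for every $k\in S^1$. \end{enumerate} Furthermore, let $A_1,A_2\in GL(4,\mathbb{R})$ be $k_1$-congruent and $k_2$-congruent respectively, with $k_1,k_2\in S^1$, and suppose $k_1$ is uniquely determined (i.e. $A_1$ is $k$-congruent only for $k=k_1$). If $A_1A_2$ (resp. $A_2A_1$) is $k$-congruent for some $k\in S^1$, then $A_1A_2$ (resp. $A_2A_1$) is $k_1$-congruent.
   Context: For $A\in GL(4,\mathbb{R})$ write in block form $A=\begin{pmatrix} a_{00} & \mathbf{a_h}\\ \mathbf{a_v}^t & \hat A\end{pmatrix}$, $A^{-1}=\begin{pmatrix} \tilde a_{00} & \mathbf{\tilde a_h}\\ \mathbf{\tilde a_v}^t & \tilde A\end{pmatrix}$, with $a_{00},\tilde a_{00}\in\mathbb{R}$, $\mathbf{a_h},\mathbf{a_v},\mathbf{\tilde a_h},\mathbf{\tilde a_v}\in\mathbb{R}^3$ (row vectors) and $\hat A,\tilde A$ $3\times3$ matrices. Condition (E) on $A$ means: $\tilde a_{00}=a_{00}$ and $\tilde A=\hat A^t$. Let $S^1=\mathbb{R}\cup\{\omega\}$ (the extended real line with $+\infty$ and $-\infty$ identified to one point $\omega$). For $k\in\mathbb{R}$ let $I^{(k)}=\mathrm{diag}(k,1,1,1)$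 and $O^{(k)}(4,\mathbb{R})=\{A\in GL(4,\mathbb{R}) : (\det A)^2=1,\ A^tI^{(k)}A=I^{(k)}\}$; and $O^{(\omega)}(4,\mathbb{R})=\{A\in GL(4,\mathbb{R}) : A^t\in O^{(0)}(4,\mathbb{R})\}$. A matrix $A$ is called $k$-congruent if $A\in O^{(k)}(4,\mathbb{R})$. *)

theory Defs
  imports "HOL-Analysis.Analysis"
begin

text \<open>4x4 real matrices indexed by the numeral type 4 = {0,1,2,3}; index 0 is the
  distinguished first row/column.\<close>
type_synonym mat4 = "real^4^4"

definition condE :: "mat4 \<Rightarrow> bool" where
  "condE A \<longleftrightarrow> matrix_inv A $ 0 $ 0 = A $ 0 $ 0 \<and>
     (\<forall>i j::4. i \<noteq> 0 \<longrightarrow> j \<noteq> 0 \<longrightarrow> matrix_inv A $ i $ j = A $ j $ i)"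

text \<open>The circle S^1 = R \<union> {\<omega>}.\<close>
datatype S1 = Fin real | Omega

definition Ik :: "real \<Rightarrow> mat4" where
  "Ik k = (\<chi> i j. if i = j then (if i = 0 then k else 1) else 0)"

definition Ok :: "real \<Rightarrow> mat4 set" where
  "Ok k = {A. invertible A \<and> (det A)^2 = 1 \<and> transpose A ** Ik k ** A = Ik k}"

definition Oext :: "S1 \<Rightarrow> mat4 set" where
  "Oext k = (case k of Fin r \<Rightarrow> Ok r | Omega \<Rightarrow> {A. invertible A \<and> transpose A \<in> Ok 0})"

definition kcong :: "S1 \<Rightarrow> mat4 \<Rightarrow> bool" where
  "kcong k A \<longleftrightarrow> A \<in> Oext k"

end

theory Submission
  imports Defs
begin

text \<open>Write \<open>A\<close> in block form with corner \<open>a\<close>, top row \<open>h\<close>, left column \<open>v\<close> and lower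
  block \<open>M\<close>. Then \<open>O(0)\<close> consists of the matrices with \<open>v = 0\<close>, \<open>a\<^sup>2 = 1\<close> and \<open>M\<close>
  orthogonal, and \<open>O(\<omega>)\<close> of those with \<open>h = 0\<close> instead; a matrix congruent for two values
  of \<open>k\<close> is block diagonal \<open>diag(\<plusminus>1, Q)\<close>, hence congruent for all of them.

  Condition (E) turns the lower block of \<open>A\<inverse> A = 1\<close> into \<open>M\<^sup>T M = 1 - v' h\<^sup>T\<close>, where \<open>v'\<close>
  is the left column of \<open>A\<inverse>\<close>; symmetry forces \<open>v' = k h\<close>, and then \<open>A\<^sup>T I(k) A\<close> agrees with
  \<open>I(k)\<close> except possibly in the corner. If \<open>(det A)\<^sup>2 = 1\<close> the determinant fixes the corner;
  condition (E) for \<open>A\<^sup>2\<close> fixes it directly, and \<open>(det A)\<^sup>2 = 1\<close> follows.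

  For products: if \<open>X \<in> O(a)\<close>, \<open>Y \<in> O(b)\<close>, \<open>Z \<in> O(c)\<close>, \<open>X Y Z = 1\<close> and \<open>a, b, c\<close> are
  distinct, then one of \<open>X, Y, Z\<close> is block diagonal. This is invariant under permuting the
  triple and under transposition, which maps \<open>O(k)\<close> to \<open>O(1/k)\<close> and exchanges \<open>0\<close> and \<open>\<omega>\<close>;
  so only finite \<open>a, b, c\<close> and the triple \<open>(0, \<omega>, k)\<close> remain. In the finite case
  \<open>I(c) - I(b)\<close>, a multiple of \<open>e\<^sub>0 e\<^sub>0\<^sup>T\<close>, is a combination of the rank-one matrices built
  from the first rows of \<open>Y\<close> and \<open>X Y\<close>, which forces the first row of \<open>Y\<close> to be \<open>\<plusminus>e\<^sub>0\<close>.\<close>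

section \<open>Outer products\<close>

definition outer :: "'a::comm_semiring_1^'m \<Rightarrow> 'a^'n \<Rightarrow> 'a^'n^'m" where
  "outer u w = (\<chi> i j. u $ i * w $ j)"

lemma outer_0 [simp]: "outer 0 w = 0" "outer u 0 = 0"
  by (simp_all add: outer_def vec_eq_iff)

lemma outer_scaleR_left:
  fixes u :: "real^'m" and w :: "real^'n"
  shows "outer (c *\<^sub>R u) w = c *\<^sub>R outer u w"
  by (simp add: outer_def vec_eq_iff)

lemma outer_scaleR_right:
  fixes u :: "real^'m" and w :: "real^'n"
  shows "outer u (c *\<^sub>R w) = c *\<^sub>R outer u w"
  by (simp add: outer_def vec_eq_iff)

lemma transpose_outer: "transpose (outer u w) = outer w u"
  by (simp add: transpose_def outer_def vec_eq_iff mult.commute)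

lemma transpose_add: "transpose (A + B) = transpose A + transpose B"
  by (simp add: transpose_def vec_eq_iff)

lemma outer_self_eq_0_iff:
  fixes u :: "real^'n"
  shows "outer u u = 0 \<longleftrightarrow> u = 0"
  by (auto simp: outer_def vec_eq_iff)

lemma outer_cancel_left:
  fixes u x y :: "real^'n"
  assumes "outer u x = outer u y" "u \<noteq> 0"
  shows "x = y"
proof -
  obtain p where "u $ p \<noteq> 0"
    using assms(2) by (auto simp: vec_eq_iff)
  then show ?thesis
    using assms(1) by (auto simp: outer_def vec_eq_iff)
qed

lemma outer_symmetric_imp_parallel:
  fixes u w :: "real^'n"
  assumes "outer u w = outer w u" "w \<noteq> 0"
  obtains k where "u = k *\<^sub>R w"
proof -
  obtain p where p: "w $ p \<noteq> 0"
    using assms(2) by (auto simp: vec_eq_iff)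
  have "u $ i * w $ p = w $ i * u $ p" for i
    using arg_cong[OF assms(1), of "\<lambda>M. M $ i $ p"] by (simp add: outer_def)
  then have "u = (u $ p / w $ p) *\<^sub>R w"
    using p by (simp add: vec_eq_iff field_simps)
  then show ?thesis
    using that by blast
qed

lemma outer_combination_eq_axis_outer:
  fixes y z :: "real^'n"
  assumes eq: "\<alpha> *\<^sub>R outer y y + \<beta> *\<^sub>R outer z z = \<gamma> *\<^sub>R outer (axis p 1) (axis p 1)"
    and "\<alpha> \<noteq> 0" "\<gamma> \<noteq> 0" "i \<noteq> p"
  shows "y $ i = 0"
proof (rule ccontr)
  assume yi: "y $ i \<noteq> 0"
  have entry: "\<alpha> * (y $ k * y $ j) + \<beta> * (z $ k * z $ j) = (if k = p \<and> j = p then \<gamma> else 0)"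
    for k j
    using arg_cong[OF eq, of "\<lambda>M. M $ k $ j"] by (auto simp: outer_def axis_def)
  have row_i: "\<alpha> * (y $ i * y $ j) + \<beta> * (z $ i * z $ j) = 0" for j
    using entry[of i j] \<open>i \<noteq> p\<close> by simp
  have "\<beta> * (z $ i * z $ i) \<noteq> 0"
    using row_i[of i] yi \<open>\<alpha> \<noteq> 0\<close> by (auto simp: add_eq_0_iff)
  then have "\<beta> \<noteq> 0" "z $ i \<noteq> 0"
    by auto
  define l where "l = - \<alpha> * y $ i / (\<beta> * z $ i)"
  have z: "z $ j = l * y $ j" for j
    using row_i[of j] \<open>\<beta> \<noteq> 0\<close> \<open>z $ i \<noteq> 0\<close> by (simp add: l_def field_simps)
  have "(\<alpha> + \<beta> * l\<^sup>2) * (y $ i * y $ i) = 0"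
    using row_i[of i] by (simp add: z power2_eq_square algebra_simps)
  then have "\<alpha> + \<beta> * l\<^sup>2 = 0"
    using yi by simp
  moreover have "(\<alpha> + \<beta> * l\<^sup>2) * (y $ p * y $ p) = \<gamma>"
    using entry[of p p] by (simp add: z power2_eq_square algebra_simps)
  ultimately show False
    using \<open>\<gamma> \<noteq> 0\<close> by simp
qed

section \<open>Block decomposition of 4 by 4 matrices\<close>

definition lift :: "3 \<Rightarrow> 4" where
  "lift i = (if i = 1 then 1 else if i = 2 then 2 else 3)"

lemma lift_neq_0 [simp]: "lift i \<noteq> 0"
  by (simp add: lift_def)

lemma lift_eq_iff [simp]: "lift i = lift j \<longleftrightarrow> i = j"
  using exhaust_3[of i] exhaust_3[of j] by (auto simp: lift_def)

lemma index_4_cases: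
  fixes i :: 4
  obtains "i = 0" | j where "i = lift j"
proof -
  have "i = 0 \<or> i = lift 1 \<or> i = lift 2 \<or> i = lift 3"
    using exhaust_4[of i] by (auto simp: lift_def)
  then show ?thesis using that by blast
qed

lemma sum_UNIV_4_lift: "(\<Sum>i\<in>UNIV. f i) = f (0::4) + (\<Sum>i\<in>UNIV. f (lift i))"
proof -
  have "i \<in> insert 0 (range lift)" for i :: 4
    by (cases i rule: index_4_cases) auto
  then have "UNIV = insert 0 (range lift)"
    by blast
  moreover have "0 \<notin> range lift"
    by auto
  moreover have "sum f (range lift) = (\<Sum>i\<in>UNIV. f (lift i))"
    by (simp add: sum.reindex inj_def)
  ultimately show ?thesis
    by (metis finite sum.insert)
qed

text \<open>In the paper's notation \<open>A $ 0 $ 0\<close>, \<open>top_row A\<close>, \<open>left_col A\<close> and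
  \<open>lower_block A\<close> are \<open>a\<^sub>0\<^sub>0\<close>, \<open>a\<^sub>h\<close>, \<open>a\<^sub>v\<close> and \<open>A\<close>-hat;
  \<open>lift\<close> enumerates the indices 1, 2, 3 of the lower block.\<close>

definition top_row :: "mat4 \<Rightarrow> real^3" where
  "top_row A = (\<chi> j. A $ 0 $ lift j)"

definition left_col :: "mat4 \<Rightarrow> real^3" where
  "left_col A = (\<chi> i. A $ lift i $ 0)"

definition lower_block :: "mat4 \<Rightarrow> real^3^3" where
  "lower_block A = (\<chi> i j. A $ lift i $ lift j)"

lemma mat4_eq_iff_blocks:
  "A = B \<longleftrightarrow> A $ 0 $ 0 = B $ 0 $ 0 \<and> top_row A = top_row B \<and> left_col A = left_col B
     \<and> lower_block A = lower_block B"
proof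
  assume "A $ 0 $ 0 = B $ 0 $ 0 \<and> top_row A = top_row B \<and> left_col A = left_col B \<and> lower_block A = lower_block B"
  then have "A $ i $ j = B $ i $ j" for i j
    by (cases i rule: index_4_cases; cases j rule: index_4_cases)
      (auto simp: top_row_def left_col_def lower_block_def vec_eq_iff)
  then show "A = B" by (simp add: vec_eq_iff)
qed simp

lemma blocks_mult:
  "(A ** B) $ 0 $ 0 = A $ 0 $ 0 * B $ 0 $ 0 + top_row A \<bullet> left_col B"
  "top_row (A ** B) = A $ 0 $ 0 *\<^sub>R top_row B + top_row A v* lower_block B"
  "left_col (A ** B) = B $ 0 $ 0 *\<^sub>R left_col A + lower_block A *v left_col B"
  "lower_block (A ** B) = outer (left_col A) (top_row B) + lower_block A ** lower_block B"
  by (simp_all add: vec_eq_iff matrix_matrix_mult_def sum_UNIV_4_lift top_row_def left_col_def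
      lower_block_def outer_def inner_vec_def vector_matrix_mult_def matrix_vector_mult_def)

lemma blocks_transpose:
  "transpose A $ 0 $ 0 = A $ 0 $ 0"
  "top_row (transpose A) = left_col A"
  "left_col (transpose A) = top_row A"
  "lower_block (transpose A) = transpose (lower_block A)"
  by (simp_all add: vec_eq_iff transpose_def top_row_def left_col_def lower_block_def)

lemma blocks_Ik:
  "Ik k $ 0 $ 0 = k" "top_row (Ik k) = 0" "left_col (Ik k) = 0" "lower_block (Ik k) = mat 1"
  by (simp_all add: vec_eq_iff Ik_def top_row_def left_col_def lower_block_def mat_def)

lemma Ik_1: "Ik 1 = mat 1"
  by (simp add: Ik_def mat_def vec_eq_iff)

lemma Ik_mult_Ik_inverse: "r \<noteq> 0 \<Longrightarrow> Ik r ** Ik (1 / r) = mat 1"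
  unfolding mat4_eq_iff_blocks by (simp add: blocks_mult blocks_Ik flip: Ik_1)

lemma congruence_Ik_blocks:
  fixes A :: mat4 and k :: real
  defines "C \<equiv> transpose A ** Ik k ** A"
  shows "C $ 0 $ 0 = k * (A $ 0 $ 0)\<^sup>2 + left_col A \<bullet> left_col A"
    and "top_row C = (k * A $ 0 $ 0) *\<^sub>R top_row A + left_col A v* lower_block A"
    and "left_col C = (k * A $ 0 $ 0) *\<^sub>R top_row A + left_col A v* lower_block A"
    and "lower_block C = k *\<^sub>R outer (top_row A) (top_row A) + transpose (lower_block A) ** lower_block A"
  unfolding C_def
  by (simp_all add: blocks_mult blocks_transpose blocks_Ik power2_eq_square outer_scaleR_left
      inner_commute mult_ac)

lemma congruence_Ik_iff:
  "transpose A ** Ik k ** A = Ik c \<longleftrightarrow>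
     k * (A $ 0 $ 0)\<^sup>2 + left_col A \<bullet> left_col A = c \<and>
     (k * A $ 0 $ 0) *\<^sub>R top_row A + left_col A v* lower_block A = 0 \<and>
     k *\<^sub>R outer (top_row A) (top_row A) + transpose (lower_block A) ** lower_block A = mat 1"
  unfolding mat4_eq_iff_blocks[where B = "Ik c"] congruence_Ik_blocks blocks_Ik by auto

lemma congruence_Ik_shift:
  "transpose X ** Ik c ** X = transpose X ** Ik a ** X + (c - a) *\<^sub>R outer (X $ 0) (X $ 0)"
proof -
  \<comment> \<open>\<open>sum_4\<close> enumerates the indices as 1, 2, 3, 4, and 4 = 0 in type \<open>4\<close>\<close>
  have "(4::4) = 0"
    by simp
  then have "X $ 4 = X $ 0"
    by (rule arg_cong)
  then show ?thesis
    by (simp add: vec_eq_iff matrix_matrix_mult_def transpose_def Ik_def outer_def sum_4 algebra_simps)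
qed

section \<open>Determinants and inverses\<close>

lemma UNIV_4_eq: "(UNIV :: 4 set) = {0, 1, 2, 3}"
proof -
  have "(4::4) = 0" by simp
  then show ?thesis using UNIV_4 by auto
qed

lemma det_4:
  "det (A::real^4^4) =
    A$0$0 * (A$1$1 * A$2$2 * A$3$3 + A$1$2 * A$2$3 * A$3$1 + A$1$3 * A$2$1 * A$3$2
           - A$1$1 * A$2$3 * A$3$2 - A$1$2 * A$2$1 * A$3$3 - A$1$3 * A$2$2 * A$3$1)
  - A$0$1 * (A$1$0 * A$2$2 * A$3$3 + A$1$2 * A$2$3 * A$3$0 + A$1$3 * A$2$0 * A$3$2
           - A$1$0 * A$2$3 * A$3$2 - A$1$2 * A$2$0 * A$3$3 - A$1$3 * A$2$2 * A$3$0)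
  + A$0$2 * (A$1$0 * A$2$1 * A$3$3 + A$1$1 * A$2$3 * A$3$0 + A$1$3 * A$2$0 * A$3$1
           - A$1$0 * A$2$3 * A$3$1 - A$1$1 * A$2$0 * A$3$3 - A$1$3 * A$2$1 * A$3$0)
  - A$0$3 * (A$1$0 * A$2$1 * A$3$2 + A$1$1 * A$2$2 * A$3$0 + A$1$2 * A$2$0 * A$3$1
           - A$1$0 * A$2$2 * A$3$1 - A$1$1 * A$2$0 * A$3$2 - A$1$2 * A$2$1 * A$3$0)"
proof -
  have f1: "finite {1::4, 2, 3}" "0 \<notin> {1::4, 2, 3}" by auto
  have f2: "finite {2::4, 3}" "1 \<notin> {2::4, 3}" by auto
  have f3: "finite {3::4}" "2 \<notin> {3::4}" by auto
  show ?thesis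
    unfolding det_def UNIV_4_eq
    unfolding sum_over_permutations_insert[OF f1]
    unfolding sum_over_permutations_insert[OF f2]
    unfolding sum_over_permutations_insert[OF f3]
    unfolding permutes_sing
    by (simp add: sign_swap_id permutation_swap_id permutation_compose sign_compose sign_id
        swap_id_eq algebra_simps)
qed

lemma det_top_row_zero:
  assumes "top_row A = 0"
  shows "det A = A $ 0 $ 0 * det (lower_block A)"
proof -
  have "A $ 0 $ 1 = 0" "A $ 0 $ 2 = 0" "A $ 0 $ 3 = 0"
    using assms by (simp_all add: top_row_def vec_eq_iff forall_3 lift_def)
  then show ?thesis
    by (simp add: det_4 det_3 lower_block_def lift_def)
qed

lemma det_left_col_zero:
  assumes "left_col A = 0"
  shows "det A = A $ 0 $ 0 * det (lower_block A)"
  using det_top_row_zero[of "transpose A"] assms by (simp add: blocks_transpose det_transpose)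

lemma det_Ik: "det (Ik k) = k"
  using det_top_row_zero[of "Ik k"] by (simp add: blocks_Ik)

lemma matrix_inv_left:
  fixes A :: "real^'n^'n"
  assumes "invertible A"
  shows "matrix_inv A ** A = mat 1"
  using someI_ex[OF assms[unfolded invertible_def]] by (simp add: matrix_inv_def)

lemma matrix_inv_right:
  fixes A :: "real^'n^'n"
  assumes "invertible A"
  shows "A ** matrix_inv A = mat 1"
  using matrix_inv_left[OF assms] matrix_left_right_inverse by blast

lemma matrix_inv_unique:
  fixes A B :: "real^'n^'n"
  assumes "B ** A = mat 1"
  shows "matrix_inv A = B"
proof -
  have "invertible A"
    using assms invertible_left_inverse by blast
  then have "B = B ** (A ** matrix_inv A)"
    by (simp add: matrix_inv_right)
  then show ?thesis
    by (metis assms matrix_mul_assoc matrix_mul_lid)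
qed

lemma matrix_inv_inv:
  fixes A :: "real^'n^'n"
  assumes "invertible A"
  shows "matrix_inv (matrix_inv A) = A"
  using matrix_inv_right[OF assms] by (rule matrix_inv_unique)

lemma matrix_inv_transpose:
  fixes A :: "real^'n^'n"
  assumes "invertible A"
  shows "matrix_inv (transpose A) = transpose (matrix_inv A)"
  by (rule matrix_inv_unique) (simp add: matrix_inv_right[OF assms] flip: matrix_transpose_mul)

lemma orthogonal_matrix_vector_matrix_mult_eq_0:
  assumes "orthogonal_matrix R" "w v* R = 0"
  shows "w = 0"
proof -
  have "w = (w v* R) v* transpose R"
    using assms(1) by (simp add: vector_matrix_mul_assoc orthogonal_matrix_def)
  then show ?thesis
    using assms(2) by simp
qed

section \<open>The congruence classes\<close>

lemma kcong_Fin: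
  "kcong (Fin k) A \<longleftrightarrow> invertible A \<and> (det A)\<^sup>2 = 1 \<and> transpose A ** Ik k ** A = Ik k"
  by (simp add: kcong_def Oext_def Ok_def)

lemma kcong_Omega: "kcong Omega A \<longleftrightarrow> kcong (Fin 0) (transpose A)"
  by (auto simp: kcong_def Oext_def Ok_def dest: transpose_invertible)

lemma kcong_invertible: "kcong k A \<Longrightarrow> invertible A"
  by (cases k) (auto simp: kcong_Fin kcong_Omega dest: transpose_invertible)

lemma kcong_det: "kcong k A \<Longrightarrow> (det A)\<^sup>2 = 1"
  by (cases k) (auto simp: kcong_Fin kcong_Omega)

lemma kcong_Fin_0_iff:
  "kcong (Fin 0) A \<longleftrightarrow> left_col A = 0 \<and> (A $ 0 $ 0)\<^sup>2 = 1 \<and> orthogonal_matrix (lower_block A)"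
proof -
  have det_sq: "(det A)\<^sup>2 = (A $ 0 $ 0)\<^sup>2"
    if "left_col A = 0" "orthogonal_matrix (lower_block A)"
    using det_left_col_zero[OF that(1)] det_orthogonal_matrix[OF that(2)]
    by (auto simp: power_mult_distrib)
  have "transpose A ** Ik 0 ** A = Ik 0 \<longleftrightarrow> left_col A = 0 \<and> orthogonal_matrix (lower_block A)"
    by (auto simp: congruence_Ik_iff orthogonal_matrix)
  then show ?thesis
    unfolding kcong_Fin invertible_det_nz using det_sq by force
qed

lemma kcong_Omega_iff:
  "kcong Omega A \<longleftrightarrow> top_row A = 0 \<and> (A $ 0 $ 0)\<^sup>2 = 1 \<and> orthogonal_matrix (lower_block A)"
  by (simp add: kcong_Omega kcong_Fin_0_iff blocks_transpose)

lemma kcong_Fin_nonzero_iff: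
  assumes "k \<noteq> 0"
  shows "kcong (Fin k) A \<longleftrightarrow> transpose A ** Ik k ** A = Ik k"
proof -
  have "(det A)\<^sup>2 = 1" if "transpose A ** Ik k ** A = Ik k"
    using arg_cong[OF that, of det] assms
    by (simp add: det_mul det_transpose det_Ik power2_eq_square)
  then show ?thesis
    by (auto simp: kcong_Fin invertible_det_nz)
qed

lemma kcong_Fin_mult:
  assumes "kcong (Fin k) X" "kcong (Fin k) Y"
  shows "kcong (Fin k) (X ** Y)"
proof -
  have "transpose (X ** Y) ** Ik k ** (X ** Y) = transpose Y ** (transpose X ** Ik k ** X) ** Y"
    by (simp add: matrix_transpose_mul matrix_mul_assoc)
  then show ?thesis
    using assms by (simp add: kcong_Fin invertible_mult det_mul power_mult_distrib)
qed

lemma kcong_mult: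
  assumes "kcong k X" "kcong k Y"
  shows "kcong k (X ** Y)"
proof (cases k)
  case Omega
  then show ?thesis
    using assms kcong_Fin_mult[of 0 "transpose Y" "transpose X"]
    by (simp add: kcong_Omega matrix_transpose_mul)
qed (use assms kcong_Fin_mult in simp)

lemma kcong_Fin_matrix_inv:
  assumes "kcong (Fin k) X"
  shows "kcong (Fin k) (matrix_inv X)"
proof -
  let ?B = "matrix_inv X"
  have XB: "X ** ?B = mat 1"
    using assms by (simp add: kcong_Fin matrix_inv_right)
  have "transpose ?B ** Ik k ** ?B = transpose ?B ** (transpose X ** Ik k ** X) ** ?B"
    using assms by (simp add: kcong_Fin)
  also have "\<dots> = transpose (X ** ?B) ** Ik k ** (X ** ?B)"
    by (simp add: matrix_transpose_mul matrix_mul_assoc)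
  finally have "transpose ?B ** Ik k ** ?B = Ik k"
    using XB by simp
  moreover have "invertible ?B"
    using XB invertible_left_inverse by blast
  moreover have "(det X)\<^sup>2 * (det ?B)\<^sup>2 = 1"
    using arg_cong[OF XB, of det] by (simp add: det_mul flip: power_mult_distrib)
  ultimately show ?thesis
    using assms by (simp add: kcong_Fin)
qed

lemma kcong_matrix_inv:
  assumes "kcong k X"
  shows "kcong k (matrix_inv X)"
proof (cases k)
  case Omega
  have "kcong (Fin 0) (matrix_inv (transpose X))"
    using assms Omega by (simp add: kcong_Omega kcong_Fin_matrix_inv)
  then show ?thesis
    using Omega by (simp add: kcong_Omega matrix_inv_transpose kcong_invertible[OF assms])
qed (use assms kcong_Fin_matrix_inv in simp)

lemma kcong_matrix_inv_iff:
  assumes "invertible X"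
  shows "kcong k (matrix_inv X) \<longleftrightarrow> kcong k X"
  using kcong_matrix_inv[of k X] kcong_matrix_inv[of k "matrix_inv X"] matrix_inv_inv[OF assms]
  by auto

definition dual :: "S1 \<Rightarrow> S1" where
  "dual k = (case k of Fin r \<Rightarrow> if r = 0 then Omega else Fin (1 / r) | Omega \<Rightarrow> Fin 0)"

lemma dual_dual [simp]: "dual (dual k) = k"
  by (cases k) (simp_all add: dual_def)

lemma dual_eq_iff [simp]: "dual k = dual l \<longleftrightarrow> k = l"
  by (metis dual_dual)

lemma dual_eq_Omega_iff: "dual k = Omega \<longleftrightarrow> k = Fin 0"
  by (cases k) (simp_all add: dual_def)

lemma congruence_Ik_transpose:
  assumes "r \<noteq> 0" "transpose A ** Ik r ** A = Ik r"
  shows "A ** Ik (1 / r) ** transpose A = Ik (1 / r)"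
proof -
  have "(transpose A ** Ik r) ** (A ** Ik (1 / r)) = mat 1"
    using assms by (simp add: matrix_mul_assoc Ik_mult_Ik_inverse flip: matrix_mul_assoc[of _ A])
  then have "(A ** Ik (1 / r)) ** (transpose A ** Ik r) ** Ik (1 / r) = Ik (1 / r)"
    using matrix_left_right_inverse by (metis matrix_mul_lid)
  then show ?thesis
    using assms(1) by (simp add: Ik_mult_Ik_inverse flip: matrix_mul_assoc)
qed

lemma kcong_transpose_dual: "kcong (dual k) (transpose A) \<longleftrightarrow> kcong k A"
proof (cases k)
  case (Fin r)
  show ?thesis
  proof (cases "r = 0")
    case False
    then have "dual k = Fin (1 / r)"
      by (simp add: Fin dual_def)
    then show ?thesis
      using False congruence_Ik_transpose[of r A] congruence_Ik_transpose[of "1 / r" "transpose A"]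
      by (simp add: Fin kcong_Fin_nonzero_iff) blast
  qed (simp add: Fin dual_def kcong_Omega)
qed (simp add: dual_def kcong_Omega)

lemma kcong_transpose_iff: "kcong k (transpose A) \<longleftrightarrow> kcong (dual k) A"
  using kcong_transpose_dual[of "dual k" A] by simp

section \<open>Matrices congruent for every k\<close>

definition block_orthogonal :: "mat4 \<Rightarrow> bool" where
  "block_orthogonal A \<longleftrightarrow>
     top_row A = 0 \<and> left_col A = 0 \<and> (A $ 0 $ 0)\<^sup>2 = 1 \<and> orthogonal_matrix (lower_block A)"

lemma block_orthogonal_iff_kcong: "block_orthogonal A \<longleftrightarrow> kcong (Fin 0) A \<and> kcong Omega A"
  by (auto simp: block_orthogonal_def kcong_Fin_0_iff kcong_Omega_iff)

lemma block_orthogonal_kcong: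
  assumes "block_orthogonal A"
  shows "kcong k A"
proof (cases k)
  case (Fin r)
  have "transpose A ** Ik r ** A = Ik r"
    using assms by (simp add: block_orthogonal_def congruence_Ik_iff orthogonal_matrix)
  moreover have "invertible A" "(det A)\<^sup>2 = 1"
    using assms kcong_invertible kcong_det unfolding block_orthogonal_iff_kcong by blast+
  ultimately show ?thesis
    by (simp add: Fin kcong_Fin)
next
  case Omega
  then show ?thesis
    using assms by (simp add: block_orthogonal_iff_kcong)
qed

lemma block_orthogonal_transpose_iff: "block_orthogonal (transpose A) \<longleftrightarrow> block_orthogonal A"
  by (auto simp: block_orthogonal_def blocks_transpose)

lemma block_orthogonal_matrix_inv_iff:
  "invertible A \<Longrightarrow> block_orthogonal (matrix_inv A) \<longleftrightarrow> block_orthogonal A"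
  by (simp add: block_orthogonal_iff_kcong kcong_matrix_inv_iff)

lemma kcong_Fin_Fin_imp_block_orthogonal:
  assumes "kcong (Fin a) A" "kcong (Fin b) A" "a \<noteq> b"
  shows "block_orthogonal A"
proof -
  let ?x = "A $ 0 $ 0" and ?h = "top_row A" and ?v = "left_col A" and ?M = "lower_block A"
  have a: "a * ?x\<^sup>2 + ?v \<bullet> ?v = a" "a *\<^sub>R outer ?h ?h + transpose ?M ** ?M = mat 1"
    and b: "b * ?x\<^sup>2 + ?v \<bullet> ?v = b" "b *\<^sub>R outer ?h ?h + transpose ?M ** ?M = mat 1"
    using assms(1,2) by (simp_all add: kcong_Fin congruence_Ik_iff)
  have "(a - b) * (?x\<^sup>2 - 1) = 0"
    using a(1) b(1) by (simp add: algebra_simps)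
  then have x: "?x\<^sup>2 = 1"
    using assms(3) by simp
  then have v: "?v = 0"
    using a(1) by simp
  have "a *\<^sub>R outer ?h ?h = b *\<^sub>R outer ?h ?h"
    using a(2) b(2) by (metis add_right_cancel)
  then have h: "?h = 0"
    using assms(3) by (simp add: scaleR_cancel_right outer_self_eq_0_iff)
  then show ?thesis
    using x v a(2) by (simp add: block_orthogonal_def orthogonal_matrix)
qed

lemma kcong_Fin_Omega_imp_block_orthogonal:
  assumes "kcong (Fin a) A" "kcong Omega A"
  shows "block_orthogonal A"
proof -
  have "a * (A $ 0 $ 0)\<^sup>2 + left_col A \<bullet> left_col A = a"
    using assms(1) by (simp add: kcong_Fin congruence_Ik_iff)
  moreover have "top_row A = 0" "(A $ 0 $ 0)\<^sup>2 = 1" "orthogonal_matrix (lower_block A)"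
    using assms(2) by (simp_all add: kcong_Omega_iff)
  ultimately show ?thesis
    by (simp add: block_orthogonal_def)
qed

lemma kcong_two_classes_imp_block_orthogonal:
  assumes "kcong a A" "kcong b A" "a \<noteq> b"
  shows "block_orthogonal A"
  using assms kcong_Fin_Fin_imp_block_orthogonal kcong_Fin_Omega_imp_block_orthogonal
  by (cases a; cases b) auto

lemma kcong_unique_or_all:
  assumes "kcong k A"
  shows "(\<exists>!k. kcong k A) \<or> (\<forall>k. kcong k A)"
proof (cases "\<forall>l. kcong l A \<longrightarrow> l = k")
  case False
  then obtain l where "kcong l A" "l \<noteq> k"
    by blast
  then have "block_orthogonal A"
    using assms kcong_two_classes_imp_block_orthogonal by blast
  then show ?thesis
    using block_orthogonal_kcong by blast
qed (use assms in blast)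

lemma kcong_Fin_top_row_zero_imp_block_orthogonal:
  assumes "kcong (Fin b) Y" "top_row Y = 0"
  shows "block_orthogonal Y"
proof -
  have orth: "orthogonal_matrix (lower_block Y)"
    using assms by (simp add: kcong_Fin congruence_Ik_iff orthogonal_matrix)
  then have "(Y $ 0 $ 0)\<^sup>2 = 1"
    using kcong_det[OF assms(1)] det_top_row_zero[OF assms(2)] det_orthogonal_matrix[OF orth]
    by (auto simp: power_mult_distrib)
  then have "kcong Omega Y"
    using assms(2) orth by (simp add: kcong_Omega_iff)
  then show ?thesis
    using assms(1) kcong_Fin_Omega_imp_block_orthogonal by blast
qed

section \<open>Products of congruent matrices\<close>

lemma kcong_Fin_product_imp_block_orthogonal:
  assumes X: "kcong (Fin a) X" and Y: "kcong (Fin b) Y" and XY: "kcong (Fin c) (X ** Y)"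
    and distinct: "distinct [a, b, c]"
  shows "block_orthogonal Y"
proof -
  let ?e = "axis 0 1 :: real^4"
  have "transpose (X ** Y) ** Ik a ** (X ** Y) = transpose Y ** (transpose X ** Ik a ** X) ** Y"
    by (simp add: matrix_transpose_mul matrix_mul_assoc)
  also have "\<dots> = Ik b + (a - b) *\<^sub>R outer (Y $ 0) (Y $ 0)"
    using X Y congruence_Ik_shift[of Y a b] by (simp add: kcong_Fin)
  finally have "Ik c = Ik b + (a - b) *\<^sub>R outer (Y $ 0) (Y $ 0)
      + (c - a) *\<^sub>R outer ((X ** Y) $ 0) ((X ** Y) $ 0)"
    using XY congruence_Ik_shift[of "X ** Y" c a] by (simp add: kcong_Fin)
  moreover have "Ik c = Ik b + (c - b) *\<^sub>R outer ?e ?e"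
    by (simp add: vec_eq_iff Ik_def outer_def axis_def)
  ultimately have "(a - b) *\<^sub>R outer (Y $ 0) (Y $ 0) + (c - a) *\<^sub>R outer ((X ** Y) $ 0) ((X ** Y) $ 0)
      = (c - b) *\<^sub>R outer ?e ?e"
    by (simp add: add.assoc)
  then have "Y $ 0 $ i = 0" if "i \<noteq> 0" for i
    by (rule outer_combination_eq_axis_outer) (use distinct that in auto)
  then have "top_row Y = 0"
    by (simp add: top_row_def vec_eq_iff)
  then show ?thesis
    using Y kcong_Fin_top_row_zero_imp_block_orthogonal by blast
qed

lemma kcong_0_Omega_product_imp_block_orthogonal:
  assumes X: "kcong (Fin 0) X" and Y: "kcong Omega Y" and XY: "kcong (Fin k) (X ** Y)"
    and "k \<noteq> 0"
  shows "block_orthogonal X"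
proof -
  have X': "left_col X = 0" "(X $ 0 $ 0)\<^sup>2 = 1" "orthogonal_matrix (lower_block X)"
    using X by (simp_all add: kcong_Fin_0_iff)
  have Y': "top_row Y = 0" "orthogonal_matrix (lower_block Y)"
    using Y by (simp_all add: kcong_Omega_iff)
  have top: "top_row (X ** Y) = top_row X v* lower_block Y"
    using Y' by (simp add: blocks_mult)
  have "orthogonal_matrix (lower_block (X ** Y))"
    using X' Y' by (simp add: blocks_mult orthogonal_matrix_mul)
  moreover have "k *\<^sub>R outer (top_row (X ** Y)) (top_row (X ** Y))
      + transpose (lower_block (X ** Y)) ** lower_block (X ** Y) = mat 1"
    using XY by (simp add: kcong_Fin congruence_Ik_iff)
  ultimately have "top_row X v* lower_block Y = 0"
    using \<open>k \<noteq> 0\<close> top by (simp add: orthogonal_matrix outer_self_eq_0_iff)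
  then have "top_row X = 0"
    using Y' orthogonal_matrix_vector_matrix_mult_eq_0 by blast
  then show ?thesis
    using X' by (simp add: block_orthogonal_def)
qed

text \<open>Stated for \<open>X Y Z = 1\<close> rather than for a product \<open>X Y\<close>, so that rotation and
  inversion of the triple give all permutations of \<open>(a, b, c)\<close>.\<close>

definition forces_block_orthogonal :: "S1 \<Rightarrow> S1 \<Rightarrow> S1 \<Rightarrow> bool" where
  "forces_block_orthogonal a b c \<longleftrightarrow>
     (\<forall>X Y Z. kcong a X \<longrightarrow> kcong b Y \<longrightarrow> kcong c Z \<longrightarrow> X ** Y ** Z = mat 1 \<longrightarrow>
        block_orthogonal X \<or> block_orthogonal Y \<or> block_orthogonal Z)"

lemma forces_block_orthogonalI:
  assumes "\<And>X Y. kcong a X \<Longrightarrow> kcong b Y \<Longrightarrow> kcong c (X ** Y) \<Longrightarrow>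
    block_orthogonal X \<or> block_orthogonal Y"
  shows "forces_block_orthogonal a b c"
  unfolding forces_block_orthogonal_def
proof (intro allI impI)
  fix X Y Z
  assume "kcong a X" "kcong b Y" "kcong c Z" "X ** Y ** Z = mat 1"
  moreover from this have "X ** Y = matrix_inv Z"
    using matrix_inv_unique by metis
  ultimately show "block_orthogonal X \<or> block_orthogonal Y \<or> block_orthogonal Z"
    using assms kcong_matrix_inv by metis
qed

lemma forces_block_orthogonal_rotate:
  assumes "forces_block_orthogonal a b c"
  shows "forces_block_orthogonal b c a"
  unfolding forces_block_orthogonal_def
proof (intro allI impI)
  fix X Y Z
  assume "kcong b X" "kcong c Y" "kcong a Z" "X ** Y ** Z = mat 1"
  moreover from this have "Z ** X ** Y = mat 1"
    by (metis matrix_left_right_inverse matrix_mul_assoc)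
  ultimately show "block_orthogonal X \<or> block_orthogonal Y \<or> block_orthogonal Z"
    using assms unfolding forces_block_orthogonal_def by blast
qed

lemma forces_block_orthogonal_reverse:
  assumes "forces_block_orthogonal a b c"
  shows "forces_block_orthogonal c b a"
  unfolding forces_block_orthogonal_def
proof (intro allI impI)
  fix X Y Z
  assume X: "kcong c X" and Y: "kcong b Y" and Z: "kcong a Z" and XYZ: "X ** Y ** Z = mat 1"
  have inv: "invertible X" "invertible Y" "invertible Z"
    using X Y Z kcong_invertible by blast+
  have "(Y ** Z) ** X = mat 1"
    using XYZ matrix_left_right_inverse by (metis matrix_mul_assoc)
  then have "matrix_inv X = Y ** Z"
    by (rule matrix_inv_unique)
  then have "matrix_inv Z ** matrix_inv Y ** matrix_inv X = matrix_inv Z ** (matrix_inv Y ** Y) ** Z"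
    by (simp add: matrix_mul_assoc)
  also have "\<dots> = mat 1"
    using inv by (simp add: matrix_inv_left)
  finally have "matrix_inv Z ** matrix_inv Y ** matrix_inv X = mat 1" .
  then have "block_orthogonal (matrix_inv Z) \<or> block_orthogonal (matrix_inv Y)
      \<or> block_orthogonal (matrix_inv X)"
    using assms X Y Z kcong_matrix_inv unfolding forces_block_orthogonal_def by blast
  then show "block_orthogonal X \<or> block_orthogonal Y \<or> block_orthogonal Z"
    using inv block_orthogonal_matrix_inv_iff by blast
qed

lemma forces_block_orthogonal_dual:
  assumes "forces_block_orthogonal a b c"
  shows "forces_block_orthogonal (dual c) (dual b) (dual a)"
  unfolding forces_block_orthogonal_def
proof (intro allI impI)
  fix X Y Z
  assume "kcong (dual c) X" "kcong (dual b) Y" "kcong (dual a) Z" "X ** Y ** Z = mat 1"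
  moreover from this have "transpose Z ** transpose Y ** transpose X = mat 1"
    by (simp add: matrix_mul_assoc flip: matrix_transpose_mul)
  ultimately have "block_orthogonal (transpose Z) \<or> block_orthogonal (transpose Y)
      \<or> block_orthogonal (transpose X)"
    using assms unfolding forces_block_orthogonal_def by (simp add: kcong_transpose_iff)
  then show "block_orthogonal X \<or> block_orthogonal Y \<or> block_orthogonal Z"
    by (auto simp: block_orthogonal_transpose_iff)
qed

lemma forces_block_orthogonal_Omega_middle:
  assumes "Fin 0 \<in> {a, c}" "distinct [a, Omega, c]"
  shows "forces_block_orthogonal a Omega c"
proof -
  have base: "forces_block_orthogonal (Fin 0) Omega (Fin k)" if "k \<noteq> 0" for k
    by (rule forces_block_orthogonalI) (use kcong_0_Omega_product_imp_block_orthogonal that in blast)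
  consider "a = Fin 0" | "c = Fin 0"
    using assms(1) by blast
  then show ?thesis
  proof cases
    case 1
    then obtain k where "c = Fin k" "k \<noteq> 0"
      using assms(2) by (cases c) auto
    then show ?thesis
      using 1 base by simp
  next
    case 2
    then obtain k where "a = Fin k" "k \<noteq> 0"
      using assms(2) by (cases a) auto
    then show ?thesis
      using 2 base forces_block_orthogonal_reverse by simp
  qed
qed

lemma forces_block_orthogonal_distinct:
  assumes "distinct [a, b, c]"
  shows "forces_block_orthogonal a b c"
proof -
  have finite: "forces_block_orthogonal (Fin x) (Fin y) (Fin z)" if "distinct [x, y, z]" for x y z
    by (rule forces_block_orthogonalI) (use kcong_Fin_product_imp_block_orthogonal that in blast)
  show ?thesis
  proof (cases "Omega \<in> {a, b, c}")
    case False
    then obtain x y z where "a = Fin x" "b = Fin y" "c = Fin z"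
      by (cases a; cases b; cases c) auto
    then show ?thesis
      using finite[of x y z] assms by simp
  next
    case Omega: True
    show ?thesis
    proof (cases "Fin 0 \<in> {a, b, c}")
      case False
      then have "dual a \<noteq> Omega" "dual b \<noteq> Omega" "dual c \<noteq> Omega"
        by (auto simp: dual_eq_Omega_iff)
      then obtain x y z where xyz: "dual c = Fin x" "dual b = Fin y" "dual a = Fin z"
        by (cases "dual a"; cases "dual b"; cases "dual c") auto
      have "distinct [dual c, dual b, dual a]"
        using assms by auto
      then have "forces_block_orthogonal (dual c) (dual b) (dual a)"
        using finite[of x y z] xyz by simp
      then show ?thesis
        using forces_block_orthogonal_dual by force
    next
      case True
      consider "b = Omega" | "a = Omega" | "c = Omega"
        using Omega by blast
      then show ?thesis
      proof cases
        case 1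
        then show ?thesis
          using True assms forces_block_orthogonal_Omega_middle[of a c] by auto
      next
        case 2
        then have "forces_block_orthogonal c a b"
          using True assms forces_block_orthogonal_Omega_middle[of c b] by auto
        then show ?thesis
          by (rule forces_block_orthogonal_rotate)
      next
        case 3
        then have "forces_block_orthogonal b c a"
          using True assms forces_block_orthogonal_Omega_middle[of b a] by auto
        then show ?thesis
          using forces_block_orthogonal_rotate by blast
      qed
    qed
  qed
qed

lemma kcong_mult_left_unique_class:
  assumes A1: "kcong k1 A1" and A2: "kcong k2 A2" and unique: "\<forall>k. kcong k A1 \<longrightarrow> k = k1"
    and P: "kcong k (A1 ** A2)"
  shows "kcong k1 (A1 ** A2)"
proof -
  consider "k2 = k1" | "k = k1" | "k = k2" "k2 \<noteq> k1" | "distinct [k1, k2, k]"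
    by auto
  then show ?thesis
  proof cases
    case 1
    then show ?thesis
      using A1 A2 kcong_mult by simp
  next
    case 2
    then show ?thesis
      using P by simp
  next
    case 3
    have "A1 = A1 ** A2 ** matrix_inv A2"
      using A2 by (simp add: kcong_invertible matrix_inv_right flip: matrix_mul_assoc)
    moreover have "kcong k2 (A1 ** A2 ** matrix_inv A2)"
      using P 3 A2 by (simp add: kcong_mult kcong_matrix_inv)
    ultimately have "kcong k2 A1"
      by simp
    then show ?thesis
      using unique 3 by blast
  next
    case 4
    have "A1 ** A2 ** matrix_inv (A1 ** A2) = mat 1"
      using P by (simp add: kcong_invertible matrix_inv_right)
    then have "block_orthogonal A1 \<or> block_orthogonal A2 \<or> block_orthogonal (matrix_inv (A1 ** A2))"
      using forces_block_orthogonal_distinct[OF 4] A1 A2 kcong_matrix_inv[OF P]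
      unfolding forces_block_orthogonal_def by blast
    moreover have "\<not> block_orthogonal A1"
      using unique 4 block_orthogonal_kcong[of A1 k2] by auto
    ultimately show ?thesis
      using A1 P block_orthogonal_kcong kcong_mult block_orthogonal_matrix_inv_iff kcong_invertible
      by blast
  qed
qed

lemma kcong_mult_right_unique_class:
  assumes A1: "kcong k1 A1" and A2: "kcong k2 A2" and unique: "\<forall>k. kcong k A1 \<longrightarrow> k = k1"
    and P: "kcong k (A2 ** A1)"
  shows "kcong k1 (A2 ** A1)"
proof -
  have "\<forall>k. kcong k (transpose A1) \<longrightarrow> k = dual k1"
    using unique by (auto simp: kcong_transpose_iff)
  moreover have "kcong (dual k) (transpose A1 ** transpose A2)"
    using P by (simp add: kcong_transpose_iff flip: matrix_transpose_mul)
  ultimately have "kcong (dual k1) (transpose A1 ** transpose A2)"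
    using A1 A2 kcong_mult_left_unique_class[of "dual k1" "transpose A1" "dual k2" "transpose A2"]
    by (simp add: kcong_transpose_iff)
  then show ?thesis
    by (simp add: kcong_transpose_iff flip: matrix_transpose_mul)
qed

section \<open>Condition (E)\<close>

lemma condE_iff:
  "condE A \<longleftrightarrow> matrix_inv A $ 0 $ 0 = A $ 0 $ 0 \<and> lower_block (matrix_inv A) = transpose (lower_block A)"
proof -
  have "(\<forall>i j::4. i \<noteq> 0 \<longrightarrow> j \<noteq> 0 \<longrightarrow> matrix_inv A $ i $ j = A $ j $ i)
      \<longleftrightarrow> (\<forall>i j. matrix_inv A $ lift i $ lift j = A $ lift j $ lift i)"
    by (metis lift_neq_0 index_4_cases)
  then show ?thesis
    by (simp add: condE_def lower_block_def transpose_def vec_eq_iff)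
qed

lemma condE_inverse_blocks:
  fixes A :: mat4
  assumes "invertible A" "condE A"
  defines "B \<equiv> matrix_inv A"
  shows "(A $ 0 $ 0)\<^sup>2 + top_row A \<bullet> left_col B = 1"
    and "(A $ 0 $ 0)\<^sup>2 + top_row B \<bullet> left_col A = 1"
    and "A $ 0 $ 0 *\<^sub>R left_col B + left_col A v* lower_block A = 0"
    and "outer (left_col B) (top_row A) + transpose (lower_block A) ** lower_block A = mat 1"
proof -
  have AB: "A ** B = Ik 1" and BA: "B ** A = Ik 1"
    using assms by (simp_all add: Ik_1 matrix_inv_left matrix_inv_right)
  have B: "B $ 0 $ 0 = A $ 0 $ 0" "lower_block B = transpose (lower_block A)"
    using assms(2) by (simp_all add: condE_iff B_def)
  show "(A $ 0 $ 0)\<^sup>2 + top_row A \<bullet> left_col B = 1"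
    using arg_cong[OF AB, of "\<lambda>M. M $ 0 $ 0"] B by (simp add: blocks_mult blocks_Ik power2_eq_square)
  show "(A $ 0 $ 0)\<^sup>2 + top_row B \<bullet> left_col A = 1"
    using arg_cong[OF BA, of "\<lambda>M. M $ 0 $ 0"] B by (simp add: blocks_mult blocks_Ik power2_eq_square)
  show "A $ 0 $ 0 *\<^sub>R left_col B + left_col A v* lower_block A = 0"
    using arg_cong[OF BA, of left_col] B by (simp add: blocks_mult blocks_Ik)
  show "outer (left_col B) (top_row A) + transpose (lower_block A) ** lower_block A = mat 1"
    using arg_cong[OF BA, of lower_block] B by (simp add: blocks_mult blocks_Ik)
qed

lemma condE_top_row_zero_imp_kcong_Omega:
  assumes "invertible A" "condE A" "top_row A = 0"
  shows "kcong Omega A"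
  using condE_inverse_blocks(1,4)[OF assms(1,2)] assms(3)
  by (simp add: kcong_Omega_iff orthogonal_matrix)

lemma condE_congruence:
  assumes "invertible A" "condE A" "top_row A \<noteq> 0"
  obtains k where "left_col (matrix_inv A) = k *\<^sub>R top_row A"
    and "transpose A ** Ik k ** A = Ik (k * (A $ 0 $ 0)\<^sup>2 + left_col A \<bullet> left_col A)"
proof -
  let ?h = "top_row A" and ?v' = "left_col (matrix_inv A)" and ?M = "lower_block A"
  note blocks = condE_inverse_blocks[OF assms(1,2)]
  have "transpose (outer ?v' ?h + transpose ?M ** ?M) = outer ?h ?v' + transpose ?M ** ?M"
    by (simp add: transpose_add transpose_outer matrix_transpose_mul)
  then have "outer ?v' ?h = outer ?h ?v'"
    using blocks(4) by (metis add_right_cancel transpose_mat)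
  then obtain k where k: "?v' = k *\<^sub>R ?h"
    using assms(3) outer_symmetric_imp_parallel by blast
  then have "transpose A ** Ik k ** A = Ik (k * (A $ 0 $ 0)\<^sup>2 + left_col A \<bullet> left_col A)"
    using blocks(3,4) by (simp add: congruence_Ik_iff outer_scaleR_left mult.commute)
  with k show ?thesis
    using that by blast
qed

lemma congruence_Ik_det_eq:
  assumes "transpose A ** Ik k ** A = Ik c" "(det A)\<^sup>2 = 1"
  shows "c = k"
  using arg_cong[OF assms(1), of det] assms(2)
  by (simp add: det_mul det_transpose det_Ik power2_eq_square mult_ac)

lemma condE_det_imp_kcong:
  assumes "invertible A" "condE A" "(det A)\<^sup>2 = 1"
  obtains k where "kcong k A"
proof (cases "top_row A = 0")
  case True
  then show ?thesis
    using assms condE_top_row_zero_imp_kcong_Omega that by blast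
next
  case False
  then obtain k where "transpose A ** Ik k ** A = Ik (k * (A $ 0 $ 0)\<^sup>2 + left_col A \<bullet> left_col A)"
    using assms condE_congruence by blast
  moreover from this have "k * (A $ 0 $ 0)\<^sup>2 + left_col A \<bullet> left_col A = k"
    using assms(3) by (rule congruence_Ik_det_eq)
  ultimately have "kcong (Fin k) A"
    using assms by (simp add: kcong_Fin)
  then show ?thesis
    by (rule that)
qed

lemma condE_square_imp_det:
  assumes inv: "invertible A" and E: "condE A" and E2: "condE (A ** A)"
  shows "(det A)\<^sup>2 = 1"
proof (cases "top_row A = 0")
  case True
  then show ?thesis
    using inv E condE_top_row_zero_imp_kcong_Omega kcong_det by blast
next
  case False
  let ?B = "matrix_inv A" and ?a = "A $ 0 $ 0" and ?h = "top_row A" and ?v = "left_col A"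
  obtain k where v': "left_col ?B = k *\<^sub>R ?h"
    and cong: "transpose A ** Ik k ** A = Ik (k * ?a\<^sup>2 + ?v \<bullet> ?v)"
    using inv E False condE_congruence by blast
  note blocks = condE_inverse_blocks[OF inv E]
  have "?B ** ?B ** (A ** A) = mat 1"
    using inv by (simp add: matrix_mul_assoc matrix_inv_left flip: matrix_mul_assoc[of ?B ?B])
  then have "lower_block (?B ** ?B) = transpose (lower_block (A ** A))"
    using E2 by (simp add: condE_iff matrix_inv_unique)
  then have "outer (left_col ?B) (top_row ?B) = outer ?h ?v"
    using E by (simp add: blocks_mult condE_iff transpose_add transpose_outer matrix_transpose_mul)
  then have "outer ?h (k *\<^sub>R top_row ?B) = outer ?h ?v"
    by (simp add: v' outer_scaleR_left outer_scaleR_right)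
  then have v: "?v = k *\<^sub>R top_row ?B"
    using False outer_cancel_left by metis
  then have "k * ?a\<^sup>2 + ?v \<bullet> ?v = k"
    using blocks(2) by (metis inner_commute inner_scaleR_left distrib_left mult.right_neutral)
  then have cong_k: "transpose A ** Ik k ** A = Ik k"
    using cong by simp
  show ?thesis
  proof (cases "k = 0")
    case True
    then have "?a\<^sup>2 = 1"
      using blocks(1) v' by simp
    then have "kcong (Fin 0) A"
      using cong_k True by (simp add: kcong_Fin_0_iff congruence_Ik_iff orthogonal_matrix)
    then show ?thesis
      by (rule kcong_det)
  next
    case False
    then show ?thesis
      using cong_k kcong_Fin_nonzero_iff kcong_det by blast
  qed
qed

theorem lemma2p3:
  shows "(\<forall>A::mat4. invertible A \<and> condE A \<and> condE (A ** A) \<longrightarrow> (det A)^2 = 1)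
    \<and> (\<forall>A::mat4. invertible A \<and> condE A \<and> (det A)^2 = 1 \<longrightarrow>
          (\<exists>k. kcong k A) \<and> ((\<exists>!k. kcong k A) \<or> (\<forall>k. kcong k A)))
    \<and> (\<forall>(A1::mat4) (A2::mat4) k1 k2. invertible A1 \<and> invertible A2 \<and>
          kcong k1 A1 \<and> kcong k2 A2 \<and> (\<forall>k. kcong k A1 \<longrightarrow> k = k1) \<longrightarrow>
          ((\<exists>k. kcong k (A1 ** A2)) \<longrightarrow> kcong k1 (A1 ** A2)) \<and>
          ((\<exists>k. kcong k (A2 ** A1)) \<longrightarrow> kcong k1 (A2 ** A1)))"
proof (intro conjI allI impI)
  fix A :: mat4
  assume "invertible A \<and> condE A \<and> condE (A ** A)"
  then show "(det A)^2 = 1"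
    using condE_square_imp_det by blast
next
  fix A :: mat4
  assume "invertible A \<and> condE A \<and> (det A)^2 = 1"
  then obtain k where "kcong k A"
    using condE_det_imp_kcong by blast
  then show "\<exists>k. kcong k A" "(\<exists>!k. kcong k A) \<or> (\<forall>k. kcong k A)"
    using kcong_unique_or_all by blast+
qed (use kcong_mult_left_unique_class kcong_mult_right_unique_class in blast)+

end
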